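(* (1) For $n\ge1$, the primary theta-seed $\Delta_1(\boldsymbol{\theta}_n)$ is nonzero. (2) For $n\ge3$, the secondary theta-seed $\Delta_2(\boldsymbol{\theta}_n)$ is nonzero.
   Context: Let $\mathbb{Q}[\boldsymbol{\theta}_n,\boldsymbol{\xi}_n,\boldsymbol{\rho}_n]$ be the $\mathbb{Q}$-algebra generated by $3n$ pairwise anticommuting variables $\theta_i,\xi_i,\rho_i$ ($1\le i\le n$) (the exterior algebra on them), with $\mathfrak{S}_n$ acting by permuting indices simultaneously in all three sets. Define $\Delta_1(\boldsymbol{\theta}_n):=\sum_{\sigma\in\mathfrak{S}_n}\mathrm{sgn}(\sigma)\sigma(\theta_1\theta_2\cdots\theta_{n-1})$ and, for $n\ge3$, $\Delta_2(\boldsymbol{\theta}_n):=\sum_{\sigma\in\mathfrak{S}_n}\mathrm{sgn}(\sigma)\sigma\bigl((\theta_1\xi_2\rho_2+\theta_2\xi_1\rho_2+\theta_2\xi_2\rho_1)\theta_3\theta_4\cdots\theta_{n-1}\bigr)$, where empty products of $\theta$'s are $1$. *)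

theory Defs
  imports Complex_Main "HOL-Combinatorics.Permutations" "HOL-Library.Product_Lexorder"
begin

text \<open>Model of the exterior algebra Q[theta_n, xi_n, rho_n].
  The exterior algebra has the Q-basis of increasing monomials (products of the generators of a
  finite set S in increasing lexicographic order); an element is represented by its coefficient
  function on these basis monomials (finite sets of generators).\<close>

type_synonym gen = "nat \<times> nat"
type_synonym ext = "gen set \<Rightarrow> rat"

definition theta :: "nat \<Rightarrow> gen" where "theta i = (0, i)"
definition xi :: "nat \<Rightarrow> gen" where "xi i = (1, i)"
definition rho :: "nat \<Rightarrow> gen" where "rho i = (2, i)"

definition inv_count :: "gen list \<Rightarrow> nat" where
  "inv_count w = card {(i, j). i < j \<and> j < length w \<and> w ! j < w ! i}"

text \<open>The element of the exterior algebra given by the product of the generators in the word w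
  (zero if a generator repeats; otherwise the sign of sorting times the basis monomial).\<close>
definition word_elt :: "gen list \<Rightarrow> ext" where
  "word_elt w = (\<lambda>S. if distinct w \<and> S = set w then (-1) ^ inv_count w else 0)"

definition perm_word :: "(nat \<Rightarrow> nat) \<Rightarrow> gen list \<Rightarrow> gen list" where
  "perm_word \<sigma> w = map (\<lambda>(k, i). (k, \<sigma> i)) w"

definition alt :: "nat \<Rightarrow> gen list \<Rightarrow> ext" where
  "alt n w = (\<lambda>S. \<Sum>\<sigma> \<in> {\<sigma>. \<sigma> permutes {1..n}}. of_int (sign \<sigma>) * word_elt (perm_word \<sigma> w) S)"

definition Delta1 :: "nat \<Rightarrow> ext" where
  "Delta1 n = alt n (map theta [1..<n])"

text \<open>Delta_2 = sum sgn(sigma) sigma((theta_1 xi_2 rho_2 + theta_2 xi_1 rho_2 + theta_2 xi_2 rho_1)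
  theta_3 ... theta_{n-1}), expanded by linearity of the action.\<close>
definition Delta2 :: "nat \<Rightarrow> ext" where
  "Delta2 n = (\<lambda>S.
      alt n ([theta 1, xi 2, rho 2] @ map theta [3..<n]) S
    + alt n ([theta 2, xi 1, rho 2] @ map theta [3..<n]) S
    + alt n ([theta 2, xi 2, rho 1] @ map theta [3..<n]) S)"

end

theory Submission
  imports Defs
begin

(*
  Evaluate each seed at the basis monomial S formed by the generators of its word w (for Delta2 the
  word theta_1 xi_2 rho_2 theta_3 ... theta_{n-1}).  A term sgn(sigma) sigma(w) has a nonzero
  S-coefficient only if sigma maps these generators onto themselves, i.e. sigma permutes the set B
  of theta-indices and fixes the other indices; the two remaining summands of Delta2 never reach S,
  since there xi and rho carry different indices.  Sorting sigma(w) costs the sign of sigma on B,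
  which cancels sgn(sigma), so all |B|! contributions equal (-1)^inv(w) and the coefficient of S is
  +-|B|!, which is nonzero.  The sign bookkeeping uses that the parity of inversions of a map is
  multiplicative under composition and equals the sign on permutations.
*)

definition ordered_pairs :: "'a::linorder set \<Rightarrow> ('a \<times> 'a) set" where
  "ordered_pairs X = {(x, y). x \<in> X \<and> y \<in> X \<and> x < y}"

definition cmp_sign :: "'a::linorder \<Rightarrow> 'a \<Rightarrow> int" where
  "cmp_sign x y = (if y < x then -1 else 1)"

definition inversion_sign :: "('a::linorder \<Rightarrow> 'b::linorder) \<Rightarrow> 'a set \<Rightarrow> int" where
  "inversion_sign f X = (\<Prod>(x, y)\<in>ordered_pairs X. cmp_sign (f x) (f y))"

lemma finite_ordered_pairs: "finite X \<Longrightarrow> finite (ordered_pairs X)"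
  unfolding ordered_pairs_def by (rule finite_subset[of _ "X \<times> X"]) auto

lemma cmp_sign_swap: "x \<noteq> y \<Longrightarrow> cmp_sign y x = - cmp_sign x y"
  by (auto simp: cmp_sign_def)

lemma inversion_sign_eq_power:
  assumes "finite X"
  shows "inversion_sign f X = (-1) ^ card {(x, y). x \<in> X \<and> y \<in> X \<and> x < y \<and> f y < f x}"
proof -
  have "inversion_sign f X = (\<Prod>p\<in>ordered_pairs X. if f (snd p) < f (fst p) then -1 else 1)"
    unfolding inversion_sign_def cmp_sign_def by (simp add: case_prod_unfold)
  also have "\<dots> = (\<Prod>p\<in>ordered_pairs X \<inter> {p. f (snd p) < f (fst p)}. -1)
      * (\<Prod>p\<in>ordered_pairs X \<inter> - {p. f (snd p) < f (fst p)}. 1)"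
    by (rule prod.If_cases[OF finite_ordered_pairs[OF assms]])
  also have "ordered_pairs X \<inter> {p. f (snd p) < f (fst p)}
      = {(x, y). x \<in> X \<and> y \<in> X \<and> x < y \<and> f y < f x}"
    by (auto simp: ordered_pairs_def)
  finally show ?thesis by simp
qed

lemma bij_betw_sorted_image_pairs:
  assumes inj: "inj_on h X"
  shows "bij_betw (\<lambda>(x, y). (min (h x) (h y), max (h x) (h y))) (ordered_pairs X) (ordered_pairs (h ` X))"
    (is "bij_betw ?sort _ _")
proof (rule bij_betw_imageI)
  show "inj_on ?sort (ordered_pairs X)"
  proof (rule inj_onI)
    fix p q assume p: "p \<in> ordered_pairs X" and q: "q \<in> ordered_pairs X" and "?sort p = ?sort q"
    moreover obtain x y x' y' where pq: "p = (x, y)" "q = (x', y')" by fastforce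
    ultimately have "{h x, h y} = {h x', h y'}"
      by (auto simp: min_def max_def split: if_splits)
    then have "{x, y} = {x', y'}"
      using inj p q pq by (auto simp: ordered_pairs_def doubleton_eq_iff dest: inj_onD)
    then show "p = q"
      using p q pq by (auto simp: ordered_pairs_def doubleton_eq_iff)
  qed
  show "?sort ` ordered_pairs X = ordered_pairs (h ` X)"
  proof (intro equalityI subsetI)
    fix p assume "p \<in> ?sort ` ordered_pairs X"
    then obtain x y where xy: "(x, y) \<in> ordered_pairs X" "p = ?sort (x, y)" by auto
    then have "h x \<noteq> h y"
      using inj by (auto simp: ordered_pairs_def dest: inj_onD)
    with xy show "p \<in> ordered_pairs (h ` X)"
      by (auto simp: ordered_pairs_def min_def max_def)
  next
    fix p assume "p \<in> ordered_pairs (h ` X)"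
    then obtain x y where "x \<in> X" "y \<in> X" "p = (h x, h y)" "h x < h y"
      by (auto simp: ordered_pairs_def)
    moreover have "x \<noteq> y" using \<open>h x < h y\<close> by auto
    ultimately consider "(x, y) \<in> ordered_pairs X" | "(y, x) \<in> ordered_pairs X"
      by (cases "x < y") (auto simp: ordered_pairs_def)
    then show "p \<in> ?sort ` ordered_pairs X"
      by cases (use \<open>p = (h x, h y)\<close> \<open>h x < h y\<close> in \<open>force intro: rev_image_eqI\<close>)+
  qed
qed

lemma prod_ordered_pairs_image:
  fixes h :: "'a::linorder \<Rightarrow> 'b::linorder" and g :: "'b \<Rightarrow> 'b \<Rightarrow> 'c::comm_monoid_mult"
  assumes inj: "inj_on h X" and sym: "\<And>x y. x \<in> h ` X \<Longrightarrow> y \<in> h ` X \<Longrightarrow> g x y = g y x"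
  shows "(\<Prod>(x, y)\<in>ordered_pairs X. g (h x) (h y)) = (\<Prod>(u, v)\<in>ordered_pairs (h ` X). g u v)"
proof -
  have "(\<Prod>(u, v)\<in>ordered_pairs (h ` X). g u v)
      = (\<Prod>(x, y)\<in>ordered_pairs X. g (min (h x) (h y)) (max (h x) (h y)))"
    using prod.reindex_bij_betw[OF bij_betw_sorted_image_pairs[OF inj], of "case_prod g"]
    by (simp add: case_prod_unfold)
  also have "\<dots> = (\<Prod>(x, y)\<in>ordered_pairs X. g (h x) (h y))"
    using sym by (intro prod.cong) (auto simp: min_def max_def ordered_pairs_def)
  finally show ?thesis ..
qed

lemma inversion_sign_compose:
  fixes f :: "'a::linorder \<Rightarrow> 'b::linorder" and g :: "'b \<Rightarrow> 'c::linorder"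
  assumes inj_f: "inj_on f X" and inj_g: "inj_on g (f ` X)"
  shows "inversion_sign (g \<circ> f) X = inversion_sign f X * inversion_sign g (f ` X)"
proof -
  \<comment> \<open>\<open>reversed u v = -1\<close> iff \<open>g\<close> reverses the order of \<open>u\<close> and \<open>v\<close>; being symmetric, it is a
    function of the unordered pair and can be transported along \<open>f\<close>.\<close>
  define reversed where "reversed = (\<lambda>u v. cmp_sign (g u) (g v) * cmp_sign u v)"
  have sym: "reversed u v = reversed v u" if "u \<in> f ` X" "v \<in> f ` X" for u v
  proof (cases "u = v")
    case False
    then have "g u \<noteq> g v" using inj_g that by (auto dest: inj_onD)
    with False show ?thesis by (simp add: reversed_def cmp_sign_swap[of u v] cmp_sign_swap[of "g u"])
  qed simp
  have "inversion_sign (g \<circ> f) X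
      = (\<Prod>(x, y)\<in>ordered_pairs X. cmp_sign (f x) (f y) * reversed (f x) (f y))"
    unfolding inversion_sign_def by (rule prod.cong) (auto simp: reversed_def cmp_sign_def)
  also have "\<dots> = inversion_sign f X * (\<Prod>(x, y)\<in>ordered_pairs X. reversed (f x) (f y))"
    by (simp add: inversion_sign_def prod.distrib case_prod_unfold)
  also have "(\<Prod>(x, y)\<in>ordered_pairs X. reversed (f x) (f y)) = (\<Prod>(u, v)\<in>ordered_pairs (f ` X). reversed u v)"
    by (rule prod_ordered_pairs_image[OF inj_f sym])
  also have "\<dots> = inversion_sign g (f ` X)"
    unfolding inversion_sign_def by (rule prod.cong) (auto simp: reversed_def cmp_sign_def ordered_pairs_def)
  finally show ?thesis .
qed

lemma inversion_sign_strict_mono_on: "strict_mono_on X f \<Longrightarrow> inversion_sign f X = 1"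
  unfolding inversion_sign_def
  by (rule prod.neutral) (auto simp: ordered_pairs_def cmp_sign_def strict_mono_on_def dest: less_asym)

lemma inversion_sign_transpose:
  assumes "finite A" "a \<in> A" "b \<in> A" "a < b"
  shows "inversion_sign (transpose a b) A = -1"
proof -
  define M where "M = {r \<in> A. a < r \<and> r < b}"
  have "finite M" using assms by (simp add: M_def)
  have "{(x, y). x \<in> A \<and> y \<in> A \<and> x < y \<and> transpose a b y < transpose a b x}
      = insert (a, b) (Pair a ` M \<union> (\<lambda>r. (r, b)) ` M)"
    using assms by (auto simp: M_def transpose_def split: if_splits)
  moreover have "card (insert (a, b) (Pair a ` M \<union> (\<lambda>r. (r, b)) ` M)) = Suc (2 * card M)"
    using \<open>finite M\<close> by (subst card_insert_disjoint, simp, force simp: M_def)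
      (subst card_Un_disjoint, auto simp: M_def card_image inj_on_def)
  ultimately show ?thesis
    using assms by (simp add: inversion_sign_eq_power)
qed

lemma inversion_sign_permutes:
  assumes "\<sigma> permutes A" "finite A"
  shows "inversion_sign \<sigma> A = sign \<sigma>"
  using assms
proof (induction rule: permutes_induct)
  case id
  show ?case by (simp add: inversion_sign_strict_mono_on strict_mono_on_def)
next
  case (swap a b p)
  have "inversion_sign (transpose a b) A = -1"
    using swap inversion_sign_transpose[OF \<open>finite A\<close>]
    by (metis linorder_neq_iff transpose_commute)
  moreover have "inversion_sign (transpose a b \<circ> p) A = inversion_sign p A * inversion_sign (transpose a b) A"
    using inversion_sign_compose[of p A "transpose a b"] permutes_inj_on[OF swap.hyps(4)]
      permutes_image[OF swap.hyps(4)] by simp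
  moreover have "sign (transpose a b \<circ> p) = - sign p"
    using swap \<open>finite A\<close>
    by (simp add: sign_compose permutation_swap_id permutes_imp_permutation sign_swap_id)
  ultimately show ?case using swap.IH by (simp del: o_apply)
qed

lemma inversion_sign_mono_neutral:
  assumes "finite X" "Y \<subseteq> X"
    and "\<And>x y. (x, y) \<in> ordered_pairs X - ordered_pairs Y \<Longrightarrow> f x < f y"
  shows "inversion_sign f X = inversion_sign f Y"
  unfolding inversion_sign_def
proof (rule prod.mono_neutral_right)
  show "finite (ordered_pairs X)" using assms(1) by (rule finite_ordered_pairs)
  show "ordered_pairs Y \<subseteq> ordered_pairs X" using assms(2) by (auto simp: ordered_pairs_def)
  show "\<forall>p\<in>ordered_pairs X - ordered_pairs Y. (\<lambda>(x, y). cmp_sign (f x) (f y)) p = 1"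
    using assms(3) by (auto simp: cmp_sign_def) (meson DiffI less_asym)
qed

lemma inv_count_eq_inversion_sign: "(-1) ^ inv_count w = inversion_sign (nth w) {..<length w}"
proof -
  have "{(i, j). i < j \<and> j < length w \<and> w ! j < w ! i}
      = {(i, j). i \<in> {..<length w} \<and> j \<in> {..<length w} \<and> i < j \<and> w ! j < w ! i}"
    by auto
  then show ?thesis by (simp add: inversion_sign_eq_power inv_count_def)
qed

lemma inv_count_map:
  assumes "distinct w" "inj_on f (set w)"
  shows "(-1) ^ inv_count (map f w) = (-1) ^ inv_count w * inversion_sign f (set w)"
proof -
  have "inj_on (nth w) {..<length w}"
    using assms(1) by (simp add: inj_on_def nth_eq_iff_index_eq)
  moreover have "nth w ` {..<length w} = set w"
    by (auto simp: set_conv_nth)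
  moreover have "inversion_sign (nth (map f w)) {..<length w} = inversion_sign (f \<circ> nth w) {..<length w}"
    unfolding inversion_sign_def by (rule prod.cong) (auto simp: ordered_pairs_def)
  ultimately show ?thesis
    using assms(2) by (simp add: inv_count_eq_inversion_sign inversion_sign_compose)
qed

definition perm_gen :: "(nat \<Rightarrow> nat) \<Rightarrow> gen \<Rightarrow> gen" where
  "perm_gen \<sigma> = (\<lambda>(k, i). (k, \<sigma> i))"

lemma perm_word_eq_map: "perm_word \<sigma> w = map (perm_gen \<sigma>) w"
  by (simp add: perm_word_def perm_gen_def)

lemma inj_perm_gen: "inj \<sigma> \<Longrightarrow> inj (perm_gen \<sigma>)"
  by (auto simp: perm_gen_def inj_def)

lemma perm_gen_simps [simp]:
  "perm_gen \<sigma> (theta i) = theta (\<sigma> i)"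
  "perm_gen \<sigma> (xi i) = xi (\<sigma> i)"
  "perm_gen \<sigma> (rho i) = rho (\<sigma> i)"
  by (simp_all add: perm_gen_def theta_def xi_def rho_def)

lemma alt_eq_0:
  assumes "\<And>\<sigma>. \<sigma> permutes {1..n} \<Longrightarrow> S \<noteq> set (perm_word \<sigma> w)"
  shows "alt n w S = 0"
  unfolding alt_def by (rule sum.neutral) (use assms in \<open>auto simp: word_elt_def\<close>)

lemma alt_eq_fact:
  assumes "distinct w" "finite B" "B \<subseteq> {1..n}"
    and reached: "\<And>\<sigma>. \<sigma> permutes {1..n} \<Longrightarrow> S = set (perm_word \<sigma> w) \<longleftrightarrow> \<sigma> permutes B"
    and sign_B: "\<And>\<sigma>. \<sigma> permutes B \<Longrightarrow> inversion_sign (perm_gen \<sigma>) (set w) = sign \<sigma>"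
  shows "alt n w S = (-1) ^ inv_count w * fact (card B)"
proof -
  \<comment> \<open>Reordering \<open>\<sigma>(w)\<close> costs \<open>sign \<sigma>\<close> again, so no two contributions cancel.\<close>
  have summand: "of_int (sign \<sigma>) * word_elt (perm_word \<sigma> w) S
      = (if \<sigma> permutes B then (-1) ^ inv_count w else 0)" if "\<sigma> permutes {1..n}" for \<sigma>
  proof (cases "\<sigma> permutes B")
    case True
    have inj: "inj_on (perm_gen \<sigma>) (set w)"
      using inj_perm_gen[OF permutes_inj[OF that]] by (rule inj_on_subset) simp
    have "(-1) ^ inv_count (perm_word \<sigma> w) = (-1) ^ inv_count w * sign \<sigma>"
      unfolding perm_word_eq_map inv_count_map[OF \<open>distinct w\<close> inj] sign_B[OF True] ..
    then have "sign \<sigma> * (-1) ^ inv_count (perm_word \<sigma> w) = (-1) ^ inv_count w"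
      by simp
    then have "of_int (sign \<sigma>) * (-1 :: rat) ^ inv_count (perm_word \<sigma> w) = (-1) ^ inv_count w"
      by (metis of_int_eq_iff of_int_minus of_int_mult of_int_power of_int_1)
    moreover have "distinct (perm_word \<sigma> w)"
      using \<open>distinct w\<close> inj by (simp add: perm_word_eq_map distinct_map)
    ultimately show ?thesis
      using True reached[OF that] by (simp add: word_elt_def)
  next
    case False
    then show ?thesis using reached[OF that] by (simp add: word_elt_def)
  qed
  have "alt n w S = (\<Sum>\<sigma>\<in>{\<sigma>. \<sigma> permutes {1..n}}. if \<sigma> permutes B then (-1) ^ inv_count w else 0)"
    unfolding alt_def by (rule sum.cong) (simp_all add: summand)
  also have "\<dots> = (\<Sum>\<sigma>\<in>{\<sigma> \<in> {\<sigma>. \<sigma> permutes {1..n}}. \<sigma> permutes B}. (-1) ^ inv_count w)"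
    by (rule sum.inter_filter[symmetric]) (simp add: finite_permutations)
  also have "{\<sigma> \<in> {\<sigma>. \<sigma> permutes {1..n}}. \<sigma> permutes B} = {\<sigma>. \<sigma> permutes B}"
    using permutes_subset[OF _ \<open>B \<subseteq> {1..n}\<close>] by blast
  finally show ?thesis
    using \<open>finite B\<close> by (simp add: card_permutations)
qed

lemma strict_mono_on_theta: "strict_mono_on X theta"
  by (simp add: strict_mono_on_def theta_def)

lemma inj_on_theta: "inj_on theta X"
  by (rule strict_mono_on_imp_inj_on[OF strict_mono_on_theta])

lemma inversion_sign_perm_gen_theta:
  assumes "\<sigma> permutes B" "finite B"
  shows "inversion_sign (perm_gen \<sigma>) (theta ` B) = sign \<sigma>"
proof -
  have "inversion_sign (perm_gen \<sigma>) (theta ` B) = inversion_sign (perm_gen \<sigma> \<circ> theta) B"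
    using inversion_sign_compose[OF inj_on_theta inj_on_subset[OF inj_perm_gen[OF permutes_inj[OF assms(1)]]]]
    by (simp add: inversion_sign_strict_mono_on[OF strict_mono_on_theta])
  also have "perm_gen \<sigma> \<circ> theta = theta \<circ> \<sigma>"
    by (simp add: fun_eq_iff)
  also have "inversion_sign (theta \<circ> \<sigma>) B = inversion_sign \<sigma> B"
    using inversion_sign_compose[OF permutes_inj_on[OF assms(1)] inj_on_theta]
    by (simp add: inversion_sign_strict_mono_on[OF strict_mono_on_theta])
  finally show ?thesis
    using inversion_sign_permutes[OF assms] by simp
qed

lemma inversion_sign_perm_gen_theta_xi_rho:
  assumes "\<sigma> permutes B" "finite B" "d \<notin> B"
  shows "inversion_sign (perm_gen \<sigma>) ({xi d, rho d} \<union> theta ` B) = sign \<sigma>"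
proof -
  have "\<sigma> d = d" using assms(1,3) by (rule permutes_not_in)
  then have "inversion_sign (perm_gen \<sigma>) ({xi d, rho d} \<union> theta ` B) = inversion_sign (perm_gen \<sigma>) (theta ` B)"
    using assms(2)
    by (intro inversion_sign_mono_neutral) (auto simp: ordered_pairs_def theta_def xi_def rho_def perm_gen_def)
  then show ?thesis
    using inversion_sign_perm_gen_theta[OF assms(1,2)] by simp
qed

lemma permutes_of_image_eq:
  assumes "\<sigma> permutes N" "\<sigma> ` B = B" "N - B = {m}"
  shows "\<sigma> permutes B"
proof (rule permutes_superset[OF assms(1)])
  have "\<sigma> ` (N - B) = N - B"
    using assms(1,2) by (simp add: image_set_diff permutes_inj permutes_image)
  then show "\<sigma> x = x" if "x \<in> N - B" for x
    using that assms(3) by auto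
qed

lemma xi_rho_theta_image_eq_iff_permutes:
  assumes \<sigma>: "\<sigma> permutes N" and "d \<notin> B" "N - insert d B = {m}"
  shows "{xi d, rho d} \<union> theta ` B = {xi (\<sigma> d), rho (\<sigma> d)} \<union> theta ` \<sigma> ` B \<longleftrightarrow> \<sigma> permutes B"
proof
  assume eq: "{xi d, rho d} \<union> theta ` B = {xi (\<sigma> d), rho (\<sigma> d)} \<union> theta ` \<sigma> ` B"
  then have "xi (\<sigma> d) \<in> {xi d, rho d} \<union> theta ` B"
    by simp
  then have "\<sigma> d = d"
    by (auto simp: theta_def xi_def rho_def)
  moreover have "{i. theta i \<in> {xi b, rho c} \<union> theta ` C} = C" for b c C
    by (auto simp: theta_def xi_def rho_def)
  then have "\<sigma> ` B = B"
    using arg_cong[OF eq, of "\<lambda>X. {i. theta i \<in> X}"] by simp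
  ultimately have "\<sigma> permutes insert d B"
    using assms(3) by (intro permutes_of_image_eq[OF \<sigma>]) auto
  then show "\<sigma> permutes B"
    by (rule permutes_superset) (use \<open>\<sigma> d = d\<close> in auto)
next
  assume "\<sigma> permutes B"
  moreover have "\<sigma> d = d"
    using \<open>\<sigma> permutes B\<close> \<open>d \<notin> B\<close> by (rule permutes_not_in)
  ultimately show "{xi d, rho d} \<union> theta ` B = {xi (\<sigma> d), rho (\<sigma> d)} \<union> theta ` \<sigma> ` B"
    by (simp add: permutes_image)
qed

lemma alt_eq_0_of_index_clash:
  assumes "xi b \<in> set w" "rho c \<in> set w" "b \<noteq> c"
    and "\<And>i j. xi i \<in> S \<Longrightarrow> rho j \<in> S \<Longrightarrow> i = j"
  shows "alt n w S = 0"
proof (rule alt_eq_0)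
  fix \<sigma> assume "\<sigma> permutes {1..n}"
  then have "\<sigma> b \<noteq> \<sigma> c" using \<open>b \<noteq> c\<close> by (auto dest: permutes_inj injD)
  moreover have "xi (\<sigma> b) \<in> set (perm_word \<sigma> w)" "rho (\<sigma> c) \<in> set (perm_word \<sigma> w)"
    using imageI[OF assms(1), of "perm_gen \<sigma>"] imageI[OF assms(2), of "perm_gen \<sigma>"]
    by (simp_all add: perm_word_eq_map)
  ultimately show "S \<noteq> set (perm_word \<sigma> w)"
    using assms(4) by blast
qed

lemma Delta1_neq_0:
  assumes "n \<ge> 1"
  shows "Delta1 n \<noteq> (\<lambda>_. 0)"
proof -
  define w where "w = map theta [1..<n]"
  have "Delta1 n (set w) = (-1) ^ inv_count w * fact (card {1..<n})"
    unfolding Delta1_def w_def[symmetric]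
  proof (rule alt_eq_fact)
    show "distinct w"
      using inj_on_theta by (simp add: w_def distinct_map)
    fix \<sigma> assume "\<sigma> permutes {1..n}"
    have "set w = set (perm_word \<sigma> w) \<longleftrightarrow> {1..<n} = \<sigma> ` {1..<n}"
      using inj_image_eq_iff[OF inj_on_theta, of "{1..<n}" "\<sigma> ` {1..<n}"]
      by (simp add: w_def perm_word_eq_map image_image)
    also have "\<dots> \<longleftrightarrow> \<sigma> permutes {1..<n}"
      using permutes_of_image_eq[OF \<open>\<sigma> permutes {1..n}\<close>, of _ n] permutes_image assms by fastforce
    finally show "set w = set (perm_word \<sigma> w) \<longleftrightarrow> \<sigma> permutes {1..<n}" .
  next
    fix \<sigma> assume "\<sigma> permutes {1..<n}"
    then show "inversion_sign (perm_gen \<sigma>) (set w) = sign \<sigma>"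
      by (simp add: w_def inversion_sign_perm_gen_theta)
  qed auto
  then show ?thesis
    by (auto dest: fun_cong[where x = "set w"])
qed

lemma Delta2_neq_0:
  assumes "n \<ge> 3"
  shows "Delta2 n \<noteq> (\<lambda>_. 0)"
proof -
  define seed where "seed = (\<lambda>a b c. [theta a, xi b, rho c] @ map theta [3..<n])"
  define B where "B = insert 1 {3..<n}"
  define S where "S = set (seed 1 2 2)"
  have set_perm_seed: "set (perm_word \<sigma> (seed a b c))
      = {xi (\<sigma> b), rho (\<sigma> c)} \<union> theta ` \<sigma> ` insert a {3..<n}" for \<sigma> a b c
    by (auto simp: seed_def perm_word_eq_map)
  have S_eq: "S = {xi 2, rho 2} \<union> theta ` B"
    by (auto simp: S_def B_def seed_def)
  have main: "alt n (seed 1 2 2) S = (-1) ^ inv_count (seed 1 2 2) * fact (card B)"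
    unfolding S_def
  proof (rule alt_eq_fact)
    show "distinct (seed 1 2 2)"
      using inj_on_theta by (auto simp: seed_def distinct_map theta_def xi_def rho_def)
    show "B \<subseteq> {1..n}" using assms by (auto simp: B_def)
  next
    fix \<sigma> assume "\<sigma> permutes {1..n}"
    moreover have "2 \<notin> B" "{1..n} - insert 2 B = {n}" using assms by (auto simp: B_def)
    ultimately show "set (seed 1 2 2) = set (perm_word \<sigma> (seed 1 2 2)) \<longleftrightarrow> \<sigma> permutes B"
      using xi_rho_theta_image_eq_iff_permutes[of \<sigma> "{1..n}" 2 B n] S_eq
      unfolding S_def set_perm_seed B_def[symmetric] by simp
  next
    fix \<sigma> assume "\<sigma> permutes B"
    then show "inversion_sign (perm_gen \<sigma>) (set (seed 1 2 2)) = sign \<sigma>"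
      using inversion_sign_perm_gen_theta_xi_rho[of \<sigma> B 2] S_eq by (simp add: S_def B_def)
  qed (simp add: B_def)
  have "\<And>i j. xi i \<in> S \<Longrightarrow> rho j \<in> S \<Longrightarrow> i = j"
    unfolding S_eq by (auto simp: theta_def xi_def rho_def)
  then have "alt n (seed 2 1 2) S = 0" "alt n (seed 2 2 1) S = 0"
    by (auto simp: seed_def intro: alt_eq_0_of_index_clash)
  with main have "Delta2 n S = (-1) ^ inv_count (seed 1 2 2) * fact (card B)"
    by (simp add: Delta2_def seed_def)
  then show ?thesis
    by (auto dest: fun_cong[where x = S])
qed

theorem proposition4p5:
  shows "(\<forall>n::nat. n \<ge> 1 \<longrightarrow> Delta1 n \<noteq> (\<lambda>_. 0))
       \<and> (\<forall>n::nat. n \<ge> 3 \<longrightarrow> Delta2 n \<noteq> (\<lambda>_. 0))"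
  using Delta1_neq_0 Delta2_neq_0 by blast

end
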